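(* Let $m\geq 1$, $n\geq 3$, and let $k,r\in\{1,\ldots,m\}$ with $k\neq r$. There exists a walk of length $n-1$ in $D^m_n$ from a vertex $i\in V^k\setminus\{1\}$ to a vertex $j\in V^r\setminus\{1\}$ if and only if there exists $\ell\in\{3,\ldots,n\}$ such that $i=(k-1)(n-1)+\ell$ and $j=(r-1)(n-1)+(\ell-1)$. Moreover, in such cases this walk is unique.
   Context: For integers $m\geq 1$, $n\geq 3$, the oriented Dutch windmill graph $D^m_n$ is the directed graph with vertex set $V=\{1,2,\ldots,m(n-1)+1\}$ whose directed edges $(a,b)$ are exactly: $(1,(k-1)(n-1)+2)$ for $k\in\{1,\ldots,m\}$; $((k-1)(n-1)+i,(k-1)(n-1)+i+1)$ for $k\in\{1,\ldots,m\}$ and $i\in\{2,\ldots,n-1\}$; and $((k-1)(n-1)+n,1)$ for $k\in\{1,\ldots,m\}$. For $k\in\{1,\ldots,m\}$, $V^k=\{1\}\cup\{(k-1)(n-1)+\ell:\ \ell=2,\ldots,n\}$. A walk is a sequence of vertices $\langle v_1,\ldots,v_r\rangle$ in which each $(v_t,v_{t+1})$ is an edge; its length is $r-1$. *)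

theory Defs
  imports Main
begin

definition dw_vertices :: "nat \<Rightarrow> nat \<Rightarrow> nat set" where
  "dw_vertices m n = {1 .. m * (n - 1) + 1}"

definition dw_edge :: "nat \<Rightarrow> nat \<Rightarrow> nat \<Rightarrow> nat \<Rightarrow> bool" where
  "dw_edge m n a b \<longleftrightarrow>
     (\<exists>k\<in>{1..m}. a = 1 \<and> b = (k - 1) * (n - 1) + 2)
   \<or> (\<exists>k\<in>{1..m}. \<exists>i\<in>{2..n - 1}. a = (k - 1) * (n - 1) + i \<and> b = (k - 1) * (n - 1) + i + 1)
   \<or> (\<exists>k\<in>{1..m}. a = (k - 1) * (n - 1) + n \<and> b = 1)"

definition dw_block :: "nat \<Rightarrow> nat \<Rightarrow> nat set" where
  "dw_block n k = {1} \<union> {(k - 1) * (n - 1) + l | l. l \<in> {2..n}}"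

text \<open>A walk is a nonempty vertex sequence with consecutive pairs being edges;
  its length is (number of vertices) - 1.\<close>
definition dw_walk :: "nat \<Rightarrow> nat \<Rightarrow> nat list \<Rightarrow> bool" where
  "dw_walk m n w \<longleftrightarrow> w \<noteq> [] \<and> set w \<subseteq> dw_vertices m n \<and>
     (\<forall>t. Suc t < length w \<longrightarrow> dw_edge m n (w ! t) (w ! Suc t))"

end

(*
  Every vertex except the centre 1 has exactly one out-neighbour. Hence a walk of length
  n - 1 from position l of blade k (the vertex (k - 1)(n - 1) + l of V^k) is forced:
  n - l steps up to the tip of blade k, one step into the centre, one step to position 2
  of some blade r, and l - 3 further steps up blade r, ending at position l - 1. For l = 2
  it ends at the centre instead. The end vertex determines r, so the walk is unique.
*)
theory Submission
  imports Defs
begin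

definition blade_vertex :: "nat \<Rightarrow> nat \<Rightarrow> nat \<Rightarrow> nat" where
  "blade_vertex n k l = (k - 1) * (n - 1) + l"

lemma blade_vertex_eq_iff:
  assumes "l \<in> {2..n}" "l' \<in> {2..n}"
  shows "blade_vertex n k l = blade_vertex n k' l' \<longleftrightarrow> k - 1 = k' - 1 \<and> l = l'"
  unfolding blade_vertex_def
proof
  assume eq: "(k - 1) * (n - 1) + l = (k' - 1) * (n - 1) + l'"
  have gap: "x * (n - 1) + (n - 1) \<le> y * (n - 1)" if "x < y" for x y :: nat
    using mult_le_mono1[of "Suc x" y "n - 1"] that by simp
  have "\<not> k - 1 < k' - 1" "\<not> k' - 1 < k - 1"
    using gap[of "k - 1" "k' - 1"] gap[of "k' - 1" "k - 1"] eq assms by auto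
  then show "k - 1 = k' - 1 \<and> l = l'"
    using eq by simp
qed simp

lemma blade_vertex_ne_centre: "l \<ge> 2 \<Longrightarrow> blade_vertex n k l \<noteq> 1"
  unfolding blade_vertex_def by simp

lemma blade_vertex_in_dw_vertices:
  assumes "k \<in> {1..m}" "l \<in> {1..n}"
  shows "blade_vertex n k l \<in> dw_vertices m n"
proof -
  have "(k - 1) * (n - 1) \<le> (m - 1) * (n - 1)"
    using assms(1) by (intro mult_le_mono1) auto
  moreover have "(m - 1) * (n - 1) + (n - 1) = m * (n - 1)"
    using assms(1) by (cases m) auto
  moreover have "l \<le> (n - 1) + 1"
    using assms(2) by auto
  ultimately have "(k - 1) * (n - 1) + l \<le> m * (n - 1) + 1"
    by linarith
  then show ?thesis
    using assms(2) unfolding dw_vertices_def blade_vertex_def by auto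
qed

lemma dw_edge_blade_step:
  assumes "k \<in> {1..m}" "l \<in> {2..n - 1}"
  shows "dw_edge m n (blade_vertex n k l) (blade_vertex n k (l + 1))"
  unfolding dw_edge_def blade_vertex_def using assms
  by (intro disjI2 disjI1 bexI[of _ k] bexI[of _ l]) auto

lemma dw_edge_tip_centre: "k \<in> {1..m} \<Longrightarrow> dw_edge m n (blade_vertex n k n) 1"
  unfolding dw_edge_def blade_vertex_def by blast

lemma dw_edge_centre_blade: "k \<in> {1..m} \<Longrightarrow> dw_edge m n 1 (blade_vertex n k 2)"
  unfolding dw_edge_def blade_vertex_def by blast

lemma dw_edge_from_blade_inner:
  assumes "l \<in> {2..n - 1}" "dw_edge m n (blade_vertex n k l) y"
  shows "y = blade_vertex n k (l + 1)"
  using assms(2) unfolding dw_edge_def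
proof (elim disjE bexE conjE)
  fix k' i
  assume "i \<in> {2..n - 1}" "blade_vertex n k l = (k' - 1) * (n - 1) + i"
    and y: "y = (k' - 1) * (n - 1) + i + 1"
  then have "k - 1 = k' - 1 \<and> l = i"
    using assms(1) blade_vertex_eq_iff[of l n i k k'] unfolding blade_vertex_def by auto
  then show ?thesis
    using y unfolding blade_vertex_def by simp
next
  fix k'
  assume "blade_vertex n k l = (k' - 1) * (n - 1) + n"
  then have "l = n"
    using assms(1) blade_vertex_eq_iff[of l n n k k'] unfolding blade_vertex_def by auto
  then show ?thesis
    using assms(1) by auto
qed (use assms(1) blade_vertex_ne_centre in auto)

lemma dw_edge_from_blade_tip:
  assumes "n \<ge> 2" "dw_edge m n (blade_vertex n k n) y"
  shows "y = 1"
  using assms(2) unfolding dw_edge_def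
proof (elim disjE bexE conjE)
  fix k' i
  assume "i \<in> {2..n - 1}" "blade_vertex n k n = (k' - 1) * (n - 1) + i"
  then have "n = i" "i \<le> n - 1"
    using assms(1) blade_vertex_eq_iff[of n n i k k'] unfolding blade_vertex_def by auto
  then show ?thesis
    using assms(1) by simp
qed (use assms(1) blade_vertex_ne_centre in auto)

lemma dw_edge_from_centre:
  "n \<ge> 2 \<Longrightarrow> dw_edge m n 1 y \<Longrightarrow> \<exists>k\<in>{1..m}. y = blade_vertex n k 2"
  unfolding dw_edge_def blade_vertex_def by auto

lemma dw_walk_along_blade:
  assumes "dw_walk m n w" "w ! s = blade_vertex n k l" "l \<ge> 2" "l + t \<le> n" "s + t < length w"
  shows "w ! (s + t) = blade_vertex n k (l + t)"
  using assms(4,5)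
proof (induction t)
  case (Suc t)
  have "dw_edge m n (blade_vertex n k (l + t)) (w ! Suc (s + t))"
    using assms(1) Suc unfolding dw_walk_def by fastforce
  then have "w ! Suc (s + t) = blade_vertex n k (l + t + 1)"
    using Suc.prems assms(3) by (intro dw_edge_from_blade_inner[where m = m]) auto
  then show ?case
    by simp
qed (use assms(2) in simp)

definition dw_tour :: "nat \<Rightarrow> nat \<Rightarrow> nat \<Rightarrow> nat \<Rightarrow> nat \<Rightarrow> nat" where
  "dw_tour n k r l t =
     (if t \<le> n - l then blade_vertex n k (l + t)
      else if t = n - l + 1 then 1
      else blade_vertex n r (t + l - n))"

lemma dw_walk_dw_tour:
  assumes "n \<ge> 3" "k \<in> {1..m}" "r \<in> {1..m}" "l \<in> {3..n}"
  shows "dw_walk m n (map (dw_tour n k r l) [0..<n])"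
proof -
  have vertex: "dw_tour n k r l t \<in> dw_vertices m n" if "t < n" for t
  proof -
    consider "t \<le> n - l" | "t = n - l + 1" | "n - l + 1 < t"
      by linarith
    then show ?thesis
    proof cases
      case 1
      then show ?thesis
        unfolding dw_tour_def using assms by (auto intro!: blade_vertex_in_dw_vertices)
    next
      case 2
      then show ?thesis
        using assms by (simp add: dw_tour_def dw_vertices_def)
    next
      case 3
      then show ?thesis
        unfolding dw_tour_def using assms that by (auto intro!: blade_vertex_in_dw_vertices)
    qed
  qed
  have edge: "dw_edge m n (dw_tour n k r l t) (dw_tour n k r l (Suc t))" if "Suc t < n" for t
  proof -
    consider "t < n - l" | "t = n - l" | "t = n - l + 1" | "t > n - l + 1"
      by linarith
    then show ?thesis
    proof cases
      case 1
      then show ?thesis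
        using assms dw_edge_blade_step[of k m "l + t" n] unfolding dw_tour_def by auto
    next
      case 2
      then show ?thesis
        using assms dw_edge_tip_centre[of k m n] unfolding dw_tour_def by auto
    next
      case 3
      then show ?thesis
        using assms dw_edge_centre_blade[of r m n] unfolding dw_tour_def by auto
    next
      case 4
      then have "dw_tour n k r l t = blade_vertex n r (t + l - n)"
          "dw_tour n k r l (Suc t) = blade_vertex n r (t + l - n + 1)"
        unfolding dw_tour_def by (auto simp: Suc_diff_le)
      moreover have "t + l - n \<in> {2..n - 1}"
        using 4 that assms by auto
      ultimately show ?thesis
        using assms dw_edge_blade_step[of r m "t + l - n" n] by auto
    qed
  qed
  show ?thesis
    unfolding dw_walk_def using assms(1) vertex edge by auto
qed

lemma hd_dw_tour: "n \<ge> 1 \<Longrightarrow> hd (map (dw_tour n k r l) [0..<n]) = blade_vertex n k l"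
  by (simp add: hd_map dw_tour_def)

lemma last_dw_tour:
  assumes "l \<in> {3..n}"
  shows "last (map (dw_tour n k r l) [0..<n]) = blade_vertex n r (l - 1)"
proof -
  have "dw_tour n k r l (n - 1) = blade_vertex n r (l - 1)"
    using assms unfolding dw_tour_def by auto
  then show ?thesis
    using assms by (simp add: last_map)
qed

lemma dw_walk_forced:
  assumes "n \<ge> 3" "dw_walk m n w" "length w = n"
    and "w ! 0 = blade_vertex n k l" "l \<in> {2..n}" "w ! (n - 1) \<noteq> 1"
  shows "l \<ge> 3 \<and> (\<exists>r\<in>{1..m}. w = map (dw_tour n k r l) [0..<n])"
proof -
  have edge: "dw_edge m n (w ! t) (w ! Suc t)" if "Suc t < n" for t
    using assms(2,3) that unfolding dw_walk_def by auto
  have first_leg: "w ! t = blade_vertex n k (l + t)" if "t \<le> n - l" for t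
    using dw_walk_along_blade[OF assms(2), of 0 k l t] assms that by auto
  have centre: "w ! (n - l + 1) = 1"
    using dw_edge_from_blade_tip[of n m k] edge[of "n - l"] first_leg[of "n - l"] assms by auto
  have "l \<noteq> 2"
  proof
    assume "l = 2"
    then have "n - l + 1 = n - 1"
      using assms(1) by simp
    then show False
      using centre assms(6) by simp
  qed
  then have l3: "l \<ge> 3"
    using assms(5) by auto
  have "n - l + 2 < n"
    using l3 assms(1,5) by auto
  then obtain r where r: "r \<in> {1..m}" "w ! (n - l + 2) = blade_vertex n r 2"
    using dw_edge_from_centre[of n m "w ! (n - l + 2)"] edge[of "n - l + 1"] centre assms(1) by auto
  have second_leg: "w ! (n - l + 2 + t) = blade_vertex n r (2 + t)" if "n - l + 2 + t < n" for t
    using dw_walk_along_blade[OF assms(2) r(2), of t] assms(3) that by auto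
  have "w ! t = dw_tour n k r l t" if "t < n" for t
  proof -
    consider "t \<le> n - l" | "t = n - l + 1" | "n - l + 2 \<le> t"
      by linarith
    then show ?thesis
    proof cases
      case 1
      then show ?thesis
        using first_leg unfolding dw_tour_def by simp
    next
      case 2
      then show ?thesis
        using centre unfolding dw_tour_def by simp
    next
      case 3
      then obtain s where s: "t = n - l + 2 + s"
        using le_Suc_ex by blast
      then have "dw_tour n k r l t = blade_vertex n r (2 + s)"
        using l3 assms(5) unfolding dw_tour_def by auto
      then show ?thesis
        using s second_leg that by simp
    qed
  qed
  then have "w = map (dw_tour n k r l) [0..<n]"
    using assms(3) by (intro nth_equalityI) auto
  with l3 r show ?thesis
    by blast
qed

lemma dw_walks_between_blades:
  assumes "n \<ge> 3" "k \<in> {1..m}" "r \<in> {1..m}" "l \<in> {2..n}" "l' \<in> {2..n}"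
  shows "(dw_walk m n w \<and> length w = n \<and> hd w = blade_vertex n k l \<and> last w = blade_vertex n r l')
    \<longleftrightarrow> (l \<ge> 3 \<and> l' = l - 1 \<and> w = map (dw_tour n k r l) [0..<n])"
proof
  assume walk: "dw_walk m n w \<and> length w = n \<and> hd w = blade_vertex n k l \<and> last w = blade_vertex n r l'"
  then have "w \<noteq> []"
    using assms(1) by auto
  then have "w ! 0 = blade_vertex n k l" "w ! (n - 1) = blade_vertex n r l'"
    using walk by (auto simp: hd_conv_nth last_conv_nth)
  moreover have "blade_vertex n r l' \<noteq> 1"
    using assms(5) blade_vertex_ne_centre by simp
  ultimately obtain r' where "l \<ge> 3" "r' \<in> {1..m}" and w: "w = map (dw_tour n k r' l) [0..<n]"
    using dw_walk_forced[of n m w k l] walk assms(1,4) by auto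
  have "blade_vertex n r' (l - 1) = blade_vertex n r l'"
    using walk w last_dw_tour[of l n k r'] assms(4) \<open>l \<ge> 3\<close> by auto
  moreover have "l - 1 \<in> {2..n}"
    using \<open>l \<ge> 3\<close> assms(4) by auto
  ultimately have "r' = r" "l' = l - 1"
    using blade_vertex_eq_iff[of "l - 1" n l' r' r] \<open>r' \<in> {1..m}\<close> assms(3,5) by auto
  with w \<open>l \<ge> 3\<close> show "l \<ge> 3 \<and> l' = l - 1 \<and> w = map (dw_tour n k r l) [0..<n]"
    by simp
next
  assume "l \<ge> 3 \<and> l' = l - 1 \<and> w = map (dw_tour n k r l) [0..<n]"
  then show "dw_walk m n w \<and> length w = n \<and> hd w = blade_vertex n k l \<and> last w = blade_vertex n r l'"
    using dw_walk_dw_tour[of n k m r l] hd_dw_tour[of n k r l] last_dw_tour[of l n k r] assms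
    by auto
qed

theorem lemma2p2:
  fixes m n k r i j :: nat
  assumes "m \<ge> 1" and "n \<ge> 3"
    and "k \<in> {1..m}" and "r \<in> {1..m}" and "k \<noteq> r"
    and "i \<in> dw_block n k - {1}" and "j \<in> dw_block n r - {1}"
  shows "((\<exists>w. dw_walk m n w \<and> length w - 1 = n - 1 \<and> hd w = i \<and> last w = j)
          \<longleftrightarrow> (\<exists>l\<in>{3..n}. i = (k - 1) * (n - 1) + l \<and> j = (r - 1) * (n - 1) + (l - 1)))
       \<and> ((\<exists>w. dw_walk m n w \<and> length w - 1 = n - 1 \<and> hd w = i \<and> last w = j)
          \<longrightarrow> (\<exists>!w. dw_walk m n w \<and> length w - 1 = n - 1 \<and> hd w = i \<and> last w = j))"
proof -
  obtain l l' where l: "l \<in> {2..n}" "i = blade_vertex n k l" and l': "l' \<in> {2..n}" "j = blade_vertex n r l'"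
    using assms(6,7) unfolding dw_block_def blade_vertex_def by auto
  have walks: "dw_walk m n w \<and> length w - 1 = n - 1 \<and> hd w = i \<and> last w = j
      \<longleftrightarrow> l \<ge> 3 \<and> l' = l - 1 \<and> w = map (dw_tour n k r l) [0..<n]" for w
    using dw_walks_between_blades[OF assms(2-4) l(1) l'(1), of w] assms(2) l l'
    unfolding dw_walk_def by auto
  have ends: "(\<exists>l''\<in>{3..n}. i = blade_vertex n k l'' \<and> j = blade_vertex n r (l'' - 1))
      \<longleftrightarrow> l \<ge> 3 \<and> l' = l - 1"
  proof
    assume "\<exists>l''\<in>{3..n}. i = blade_vertex n k l'' \<and> j = blade_vertex n r (l'' - 1)"
    then obtain l'' where l'': "l'' \<in> {3..n}" "i = blade_vertex n k l''" "j = blade_vertex n r (l'' - 1)"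
      by blast
    moreover have "l'' - 1 \<in> {2..n}"
      using l'' by auto
    ultimately have "l'' = l" "l'' - 1 = l'"
      using l l' blade_vertex_eq_iff[of l'' n l k k] blade_vertex_eq_iff[of "l'' - 1" n l' r r] by auto
    then show "l \<ge> 3 \<and> l' = l - 1"
      using l'' by auto
  qed (use l l' in auto)
  show ?thesis
    unfolding blade_vertex_def[symmetric] walks ends by auto
qed

end
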